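(* Let $\mathbb{K}$ be a field and let $f,g,u,v$ be endomorphisms of the additive group $(\mathbb{K},+)$ such that $$\forall (x,t)\in\mathbb{K}^2,\quad g(t^2x)+v(tx)=t\,f(x)+t\,u(tx).$$ (a) If $\mathbb{K}$ has characteristic not $2$, there are scalars $\lambda,\mu$ such that $f(x)=\lambda x$, $u(x)=\mu x$, $v(x)=\lambda x$ and $g(x)=\mu x$ for all $x$. (b) If $\mathbb{K}$ has characteristic $2$, there are scalars $\lambda,\mu$ and a root-linear form $\alpha$ on $\mathbb{K}$ such that $f(x)=\lambda x+\alpha(x)$, $u(x)=\mu x$, $v(x)=\lambda x$ and $g(x)=\mu x+\alpha(x)$ for all $x$.
   Context: In characteristic $2$, a root-linear form on $\mathbb{K}$ is an additive map $\alpha:\mathbb{K}\to\mathbb{K}$ with $\alpha(\lambda^2x)=\lambda\alpha(x)$ for all $\lambda,x\in\mathbb{K}$. *)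

theory Defs
  imports Main
begin

definition additive_endo :: "('a::field \<Rightarrow> 'a) \<Rightarrow> bool" where
  "additive_endo f \<longleftrightarrow> (\<forall>x y. f (x + y) = f x + f y)"

definition root_linear :: "('a::field \<Rightarrow> 'a) \<Rightarrow> bool" where
  "root_linear \<alpha> \<longleftrightarrow> additive_endo \<alpha> \<and> (\<forall>l x. \<alpha> (l^2 * x) = l * \<alpha> x)"

end

theory Submission imports Defs begin

text \<open>Substituting \<open>t + 1\<close> for \<open>t\<close> and subtracting the instances at \<open>t\<close> and \<open>1\<close> yields
  \<open>2 g(tx) = t u(x) + u(tx)\<close>. Taking \<open>t = 1\<close> and \<open>x = 1\<close> makes \<open>u\<close> and \<open>g\<close> linear when
  \<open>2 \<noteq> 0\<close>, and then \<open>v(tx) = t f(x)\<close> makes \<open>f = v\<close> linear. In characteristic 2 the identity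
  says \<open>u\<close> is linear; put \<open>\<alpha> = g - u\<close>. The defect \<open>D t x = v(tx) - t v(x)\<close> of \<open>v\<close> then
  satisfies \<open>D t x = t \<alpha>(x) - \<alpha>(t\<^sup>2x)\<close>, and expanding \<open>D (ts) x\<close> in two ways gives
  \<open>D t (sx) = D t (s\<^sup>2x)\<close>; with \<open>s = t\<close> and \<open>t\<^sup>2 \<noteq> t\<close> this forces \<open>D = 0\<close>, so \<open>v\<close> is
  linear and \<open>\<alpha>\<close> is root-linear.\<close>

lemma additive_endo_add: "additive_endo f \<Longrightarrow> f (a + b) = f a + f b"
  unfolding additive_endo_def by blast

lemma additive_endo_zero: "additive_endo f \<Longrightarrow> f 0 = 0"
  using additive_endo_add[of f 0 0] by (metis add.right_neutral add_left_cancel)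

lemma additive_endo_minus: "additive_endo f \<Longrightarrow> f (- a) = - f a"
  using additive_endo_add[of f a "- a"] additive_endo_zero[of f]
  by (simp add: eq_neg_iff_add_eq_0 add.commute)

lemma additive_endo_diff: "additive_endo f \<Longrightarrow> f (a - b) = f a - f b"
  using additive_endo_add[of f a "- b"] additive_endo_minus[of f b] by simp

lemma eq_if_add_eq_0_char_2:
  fixes a b :: "'a::ring_1"
  assumes "(2::'a) = 0" and "a + b = 0"
  shows "a = b"
proof -
  have "b + b = 0" using assms(1) by (metis mult_2 mult_zero_left)
  with assms(2) show ?thesis by (metis add_right_cancel)
qed

locale additive_functional_equation =
  fixes f g u v :: "'a::field \<Rightarrow> 'a"
  assumes f_additive: "additive_endo f" and g_additive: "additive_endo g"
    and u_additive: "additive_endo u" and v_additive: "additive_endo v"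
    and equation: "\<And>x t. g (t^2 * x) + v (t * x) = t * f x + t * u (t * x)"
begin

lemma equation_at_1: "g x + v x = f x + u x"
  using equation[where x=x and t=1] by simp

lemma double_g: "2 * g (t * x) = t * u x + u (t * x)"
proof -
  have sq: "(t + 1)^2 * x = t^2 * x + (t * x + t * x) + x" and lin: "(t + 1) * x = t * x + x"
    by (simp_all add: power2_eq_square algebra_simps)
  have at_t_plus_1: "g (t^2 * x) + (g (t * x) + g (t * x)) + g x + (v (t * x) + v x)
        = (t + 1) * f x + (t + 1) * (u (t * x) + u x)"
    using equation[where x=x and t="t + 1"] unfolding sq lin
    by (simp only: additive_endo_add[OF g_additive] additive_endo_add[OF v_additive]
        additive_endo_add[OF u_additive])
  have "2 * g (t * x) - (t * u x + u (t * x))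
      = (g (t^2 * x) + (g (t * x) + g (t * x)) + g x + (v (t * x) + v x)
          - ((t + 1) * f x + (t + 1) * (u (t * x) + u x)))
        - (g (t^2 * x) + v (t * x) - (t * f x + t * u (t * x)))
        - (g x + v x - (f x + u x))"
    by (simp add: algebra_simps)
  also have "\<dots> = 0"
    using at_t_plus_1 equation[where x=x and t=t] equation_at_1[of x] by simp
  finally show ?thesis by simp
qed

lemma linear_solution_char_not_2:
  assumes "(2::'a) \<noteq> 0"
  shows "f x = f 1 * x \<and> u x = u 1 * x \<and> v x = f 1 * x \<and> g x = u 1 * x"
proof -
  have g_eq_u: "g y = u y" for y
    using double_g[of 1 y] assms by simp
  have u_lin: "u y = u 1 * y" for y
    using double_g[of y 1] g_eq_u[of y] by (simp add: mult_2 mult.commute)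
  have v_hom: "v (t * y) = t * f y" for t y
    using equation[where x=y and t=t] g_eq_u[of "t^2 * y"] u_lin[of "t^2 * y"] g_eq_u[of "t * y"]
      u_lin[of "t * y"] by (simp add: power2_eq_square algebra_simps)
  have "v x = f x" and "v x = f 1 * x"
    using v_hom[of 1 x] v_hom[of x 1] by (simp_all add: mult.commute)
  then show ?thesis using u_lin[of x] g_eq_u[of x] by simp
qed

context
  assumes char_2: "(2::'a) = 0"
begin

lemma u_homogeneous: "u (t * x) = t * u x"
  using double_g[of t x] char_2 eq_if_add_eq_0_char_2[of "u (t * x)" "t * u x"]
  by (simp add: add.commute)

definition defect :: "'a \<Rightarrow> 'a \<Rightarrow> 'a" where
  "defect t x = v (t * x) - t * v x"

lemma defect_eq: "defect t x = t * (g x - u x) - (g (t^2 * x) - u (t^2 * x))"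
proof -
  have "t * (g x + v x) = t * (f x + u x)"
    using equation_at_1[of x] by simp
  with equation[where x=x and t=t] show ?thesis
    using u_homogeneous[of t x] u_homogeneous[of "t^2" x]
    by (simp add: defect_def algebra_simps power2_eq_square)
qed

lemma defect_square_invariant: "defect t (s * x) = defect t (s^2 * x)"
proof -
  have "defect (t * s) x = defect t (s * x) + t * defect s x"
    by (simp add: defect_def algebra_simps)
  moreover have "defect (t * s) x = defect t (s^2 * x) + t * defect s x"
    unfolding defect_eq by (simp add: power2_eq_square algebra_simps)
  ultimately show ?thesis by simp
qed

lemma defect_eq_0: "defect t y = 0"
proof (cases "t^2 = t")
  case True
  then have "t = 0 \<or> t = 1" by (simp add: power2_eq_square)
  then show ?thesis by (auto simp: defect_def additive_endo_zero[OF v_additive])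
next
  case False
  define x where "x = y / (t^2 - t)"
  have "(t^2 - t) * x = y" using False by (simp add: x_def)
  then have y: "y = t^2 * x - t * x" by (simp add: left_diff_distrib)
  show ?thesis
    using defect_square_invariant[of t t x]
    unfolding y defect_def by (simp add: additive_endo_diff[OF v_additive] algebra_simps)
qed

lemma v_homogeneous: "v (t * x) = t * v x"
  using defect_eq_0[of t x] by (simp add: defect_def)

lemma root_linear_g_minus_u: "root_linear (\<lambda>x. g x - u x)"
  unfolding root_linear_def additive_endo_def
  using defect_eq_0 defect_eq
  by (simp add: additive_endo_add[OF g_additive] additive_endo_add[OF u_additive] algebra_simps)

lemma root_linear_solution_char_2:
  "f x = v 1 * x + (g x - u x) \<and> u x = u 1 * x \<and> v x = v 1 * x \<and> g x = u 1 * x + (g x - u x)"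
  using equation_at_1[of x] u_homogeneous[of x 1] v_homogeneous[of x 1]
  by (simp add: algebra_simps)

end

end

theorem lemma3p1:
  fixes f g u v :: "'a::field \<Rightarrow> 'a"
  assumes "additive_endo f" "additive_endo g" "additive_endo u" "additive_endo v"
    and eq: "\<forall>x t. g (t^2 * x) + v (t * x) = t * f x + t * u (t * x)"
  shows "((2::'a) \<noteq> 0 \<longrightarrow>
            (\<exists>lam mu. \<forall>x. f x = lam * x \<and> u x = mu * x \<and> v x = lam * x \<and> g x = mu * x))
       \<and> ((2::'a) = 0 \<longrightarrow>
            (\<exists>lam mu \<alpha>. root_linear \<alpha> \<and>
               (\<forall>x. f x = lam * x + \<alpha> x \<and> u x = mu * x \<and> v x = lam * x \<and> g x = mu * x + \<alpha> x)))"
proof -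
  interpret additive_functional_equation f g u v
    using assms by unfold_locales blast+
  show ?thesis
    using linear_solution_char_not_2 root_linear_g_minus_u root_linear_solution_char_2 by blast
qed

end
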